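(* Let $e_1,e_2,e_3$ be complex numbers with $e_1+e_2+e_3=0$ for which the associated Weierstrass lattice is non-degenerate (two independent periods), and let $\wp(z)$ and $\zeta(z)$ be the Weierstrass elliptic and zeta functions with $\wp'(z)^2=4(\wp(z)-e_1)(\wp(z)-e_2)(\wp(z)-e_3)$ and $\zeta'(z)=-\wp(z)$, $\zeta$ odd. Let $w,\beta,q,\mu_1$ be arbitrary complex parameters and define, for $n=0,1,2,\dots$, $$u_n(t)=w^2n^2\big(\wp(w(t+\beta))-\wp(nw(t+\beta)+q)\big),$$ $$b_n(t)=\mu_1+w(n+1)\,\zeta\big(w(n+1)(t+\beta)+q\big)-wn\,\zeta\big(wn(t+\beta)+q\big)-(2n+1)w\,\zeta\big(w(t+\beta)\big).$$ Then $u_0=0$ and $u_n,b_n$ satisfy the Toda chain equations $$\dot u_n=u_n(b_n-b_{n-1})\ (n\ge1),\qquad \dot b_n=u_{n+1}-u_n\ (n\ge 0),$$ where the dot denotes differentiation with respect to $t$ (as identities of meromorphic functions of $t$). *)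

theory Defs
  imports "HOL-Analysis.Analysis"
begin

definition lattice :: "complex \<Rightarrow> complex \<Rightarrow> complex set" where
  "lattice w1 w2 = {of_int m * w1 + of_int n * w2 | m n. True}"

definition wp :: "complex \<Rightarrow> complex \<Rightarrow> complex \<Rightarrow> complex" where
  "wp w1 w2 z = 1 / z\<^sup>2 +
     (\<Sum>\<^sub>\<infinity>\<omega>\<in>lattice w1 w2 - {0}. 1 / (z - \<omega>)\<^sup>2 - 1 / \<omega>\<^sup>2)"

definition wzeta :: "complex \<Rightarrow> complex \<Rightarrow> complex \<Rightarrow> complex" where
  "wzeta w1 w2 z = 1 / z +
     (\<Sum>\<^sub>\<infinity>\<omega>\<in>lattice w1 w2 - {0}. 1 / (z - \<omega>) + 1 / \<omega> + z / \<omega>\<^sup>2)"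

definition toda_u ::
  "complex \<Rightarrow> complex \<Rightarrow> complex \<Rightarrow> complex \<Rightarrow> complex \<Rightarrow> nat \<Rightarrow> complex \<Rightarrow> complex" where
  "toda_u w1 w2 w \<beta> q n t =
     w\<^sup>2 * (of_nat n)\<^sup>2 * (wp w1 w2 (w * (t + \<beta>)) - wp w1 w2 (of_nat n * w * (t + \<beta>) + q))"

definition toda_b ::
  "complex \<Rightarrow> complex \<Rightarrow> complex \<Rightarrow> complex \<Rightarrow> complex \<Rightarrow> complex \<Rightarrow> nat \<Rightarrow> complex \<Rightarrow> complex" where
  "toda_b w1 w2 w \<beta> q \<mu>1 n t =
     \<mu>1 + w * (of_nat n + 1) * wzeta w1 w2 (w * (of_nat n + 1) * (t + \<beta>) + q)
        - w * of_nat n * wzeta w1 w2 (w * of_nat n * (t + \<beta>) + q)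
        - (2 * of_nat n + 1) * w * wzeta w1 w2 (w * (t + \<beta>))"

text \<open>Regular points: t is away from the poles of all functions involving the index k
  (the term with index 0 is multiplied by 0, so it is not a pole).\<close>
definition toda_regular ::
  "complex \<Rightarrow> complex \<Rightarrow> complex \<Rightarrow> complex \<Rightarrow> complex \<Rightarrow> nat \<Rightarrow> complex \<Rightarrow> bool" where
  "toda_regular w1 w2 w \<beta> q k t \<longleftrightarrow>
     w * (t + \<beta>) \<notin> lattice w1 w2 \<and>
     (k = 0 \<or> of_nat k * w * (t + \<beta>) + q \<notin> lattice w1 w2)"

end

theory Submission
  imports Defs "HOL-Complex_Analysis.Complex_Analysis" "HOL-Library.Landau_Symbols"
begin

text \<open>
  The Weierstrass functions are built from their defining series: absolute convergence of
  \<open>\<Sum>\<omega>\<noteq>0. 1 / |\<omega>|\<^sup>3\<close> over the lattice justifies termwise differentiation, giving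
  \<open>\<zeta>' = -\<wp>\<close>, parity, periodicity of \<open>\<wp>\<close> and \<open>\<wp>'\<close> and quasi-periodicity of \<open>\<zeta>\<close>.
  The heart of the argument is the addition formula
  \<open>(\<zeta>(y + x) + \<zeta>(y - x) - 2\<zeta>(y)) (\<wp>(y) - \<wp>(x)) = \<wp>'(y)\<close>: the difference of the two sides
  is an odd elliptic function of \<open>y\<close> whose singularities are all removable, hence by Liouville a
  constant, hence zero.  With \<open>X = w(t + \<beta>)\<close> and \<open>Y = nw(t + \<beta>) + q\<close> the equation for
  \<open>b\<^sub>n\<close> is a direct differentiation, since \<open>(n + 1)\<^sup>2 - n\<^sup>2 = 2n + 1\<close>; for \<open>u\<^sub>n\<close> the
  addition formula at \<open>(X, Y)\<close> and at \<open>(Y, X)\<close> combine to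
  \<open>\<wp>'(X) - n\<wp>'(Y) = (\<wp>(X) - \<wp>(Y)) ((n + 1)\<zeta>(Y + X) - 2n\<zeta>(Y) + (n - 1)\<zeta>(Y - X) - 2\<zeta>(X))\<close>,
  which is exactly \<open>u\<^sub>n' = u\<^sub>n (b\<^sub>n - b\<^sub>n\<^sub>-\<^sub>1)\<close>.
\<close>

section \<open>Geometry of the period lattice\<close>

lemma summable_on_int_powr:
  fixes s :: real
  assumes "s > 1"
  shows "(\<lambda>m::int. (1 + \<bar>real_of_int m\<bar>) powr (-s)) summable_on UNIV"
proof -
  let ?f = "\<lambda>m::int. (1 + \<bar>real_of_int m\<bar>) powr (-s)"
  have "summable (\<lambda>n::nat. real (Suc n) powr (-s))"
    using assms by (subst summable_Suc_iff) (simp add: summable_real_powr_iff)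
  then have nat: "(\<lambda>n::nat. (1 + real n) powr (-s)) summable_on UNIV"
    by (subst summable_on_UNIV_nonneg_real_iff) (auto simp: add.commute)
  have "?f summable_on range int"
    by (subst summable_on_reindex) (auto simp: o_def nat)
  moreover have "?f summable_on range (\<lambda>n. - int n)"
    by (subst summable_on_reindex) (auto simp: o_def nat inj_on_def)
  moreover have "range int \<union> range (\<lambda>n. - int n) = (UNIV :: int set)"
    by (auto intro: int_cases2)
  ultimately show ?thesis
    using summable_on_union by metis
qed

lemma inverse_cube_le_powr_product:
  fixes m n :: int
  assumes "(m, n) \<noteq> (0, 0)"
  shows "1 / (\<bar>real_of_int m\<bar> + \<bar>real_of_int n\<bar>) ^ 3
           \<le> 8 * ((1 + \<bar>real_of_int m\<bar>) * (1 + \<bar>real_of_int n\<bar>)) powr - (3/2)"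
proof -
  define s where "s = \<bar>real_of_int m\<bar> + \<bar>real_of_int n\<bar>"
  define p where "p = (1 + \<bar>real_of_int m\<bar>) * (1 + \<bar>real_of_int n\<bar>)"
  have s: "s \<ge> 1" using assms by (auto simp: s_def)
  have p: "p > 0" by (simp add: p_def add_pos_nonneg)
  have "p \<le> (1 + s)\<^sup>2"
    by (simp add: p_def s_def power2_eq_square algebra_simps)
  also have "\<dots> \<le> (2 * s) powr 2"
    using s mult_mono[of "1 + s" "2 * s" "1 + s" "2 * s"] by (simp add: powr_numeral power2_eq_square)
  finally have "p powr (3/2) \<le> ((2 * s) powr 2) powr (3/2)"
    by (intro powr_mono2) (use p in auto)
  also have "\<dots> = 8 * s ^ 3"
    unfolding powr_powr using s by (simp add: powr_numeral)
  finally have "p powr (3/2) \<le> 8 * s ^ 3" .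
  then have "8 / (8 * s ^ 3) \<le> 8 / p powr (3/2)"
    using s p by (intro divide_left_mono) auto
  then show ?thesis
    by (simp add: powr_minus_divide flip: s_def p_def)
qed

locale period_lattice =
  fixes w1 w2 :: complex
  assumes nondeg: "Im (w2 / w1) \<noteq> 0"
begin

abbreviation "\<Lambda> \<equiv> lattice w1 w2"

definition lattice_point :: "int \<times> int \<Rightarrow> complex" where
  "lattice_point = (\<lambda>(m, n). of_int m * w1 + of_int n * w2)"

lemma w1_nonzero: "w1 \<noteq> 0"
  using nondeg by auto

lemma lattice_eq_range: "\<Lambda> = range lattice_point"
  by (auto simp: lattice_def lattice_point_def)

lemma mem_lattice_iff: "z \<in> \<Lambda> \<longleftrightarrow> (\<exists>m n. z = of_int m * w1 + of_int n * w2)"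
  by (auto simp: lattice_def)

lemma lattice_0 [simp]: "0 \<in> \<Lambda>"
  unfolding mem_lattice_iff by (intro exI[of _ 0]) simp

lemma lattice_add: "a \<in> \<Lambda> \<Longrightarrow> b \<in> \<Lambda> \<Longrightarrow> a + b \<in> \<Lambda>"
  unfolding mem_lattice_iff
  by (auto, rule_tac x="m + ma" in exI, rule_tac x="n + na" in exI, simp add: algebra_simps)

lemma lattice_uminus_iff [simp]: "- a \<in> \<Lambda> \<longleftrightarrow> a \<in> \<Lambda>"
proof -
  have "- a \<in> \<Lambda>" if "a \<in> \<Lambda>" for a
    using that unfolding mem_lattice_iff
    by (auto, rule_tac x="- m" in exI, rule_tac x="- n" in exI, simp add: algebra_simps)
  from this[of a] this[of "- a"] show ?thesis by auto
qed

lemma lattice_diff: "a \<in> \<Lambda> \<Longrightarrow> b \<in> \<Lambda> \<Longrightarrow> a - b \<in> \<Lambda>"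
  using lattice_add[of a "- b"] by simp

lemma add_lattice_iff: "a \<in> \<Lambda> \<Longrightarrow> z + a \<in> \<Lambda> \<longleftrightarrow> z \<in> \<Lambda>"
  using lattice_add[of z a] lattice_diff[of "z + a" a] by auto

lemma inj_lattice_point: "inj lattice_point"
proof (rule injI, clarsimp simp: lattice_point_def)
  fix m n m' n' :: int
  assume eq: "of_int m * w1 + of_int n * w2 = of_int m' * w1 + of_int n' * w2"
  show "m = m' \<and> n = n'"
  proof (cases "n = n'")
    case True
    with eq w1_nonzero show ?thesis by simp
  next
    case False
    then have "w2 / w1 = of_real (of_int (m' - m) / of_int (n - n'))"
      using eq w1_nonzero by (simp add: field_simps)
    with nondeg show ?thesis by simp
  qed
qed

definition lattice_scale :: real where
  "lattice_scale = norm w1 / (1 + (1 + norm (w2 / w1)) / \<bar>Im (w2 / w1)\<bar>)"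

lemma lattice_scale_pos: "lattice_scale > 0"
  unfolding lattice_scale_def using w1_nonzero nondeg by (auto intro!: divide_pos_pos add_pos_nonneg)

lemma norm_lattice_point_ge:
  "lattice_scale * (\<bar>real_of_int m\<bar> + \<bar>real_of_int n\<bar>) \<le> norm (lattice_point (m, n))"
proof -
  define \<tau> where "\<tau> = w2 / w1"
  define z where "z = of_int m + of_int n * \<tau>"
  define K where "K = 1 + (1 + norm \<tau>) / \<bar>Im \<tau>\<bar>"
  have Im: "\<bar>Im \<tau>\<bar> > 0" using nondeg by (simp add: \<tau>_def)
  have K: "K > 0" using Im by (simp add: K_def add_pos_nonneg)
  have n: "\<bar>real_of_int n\<bar> * \<bar>Im \<tau>\<bar> \<le> norm z"
    using abs_Im_le_cmod[of z] by (simp add: z_def abs_mult)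
  have "\<bar>real_of_int m\<bar> = norm (z - of_int n * \<tau>)" by (simp add: z_def)
  also have "\<dots> \<le> norm z + \<bar>real_of_int n\<bar> * norm \<tau>"
    by (metis norm_triangle_ineq4 norm_mult norm_of_int)
  finally have m: "\<bar>real_of_int m\<bar> \<le> norm z + \<bar>real_of_int n\<bar> * norm \<tau>" .
  have "\<bar>real_of_int n\<bar> \<le> norm z / \<bar>Im \<tau>\<bar>"
    using n Im by (simp add: field_simps)
  with m have "\<bar>real_of_int m\<bar> + \<bar>real_of_int n\<bar> \<le> norm z + norm z / \<bar>Im \<tau>\<bar> * (1 + norm \<tau>)"
    by (smt (verit) mult_right_mono norm_ge_zero distrib_left mult.commute mult_cancel_right1)
  also have "\<dots> = K * norm z" by (simp add: K_def algebra_simps)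
  finally have "\<bar>real_of_int m\<bar> + \<bar>real_of_int n\<bar> \<le> K * norm z" .
  then have "lattice_scale * (\<bar>real_of_int m\<bar> + \<bar>real_of_int n\<bar>) \<le> lattice_scale * (K * norm z)"
    using lattice_scale_pos by (intro mult_left_mono) auto
  also have "\<dots> = norm (lattice_point (m, n))"
  proof -
    have "lattice_point (m, n) = w1 * z"
      using w1_nonzero by (simp add: lattice_point_def z_def \<tau>_def field_simps)
    moreover have "lattice_scale * K = norm w1"
      using K by (simp add: lattice_scale_def K_def \<tau>_def)
    ultimately show ?thesis
      by (simp add: norm_mult flip: mult.assoc)
  qed
  finally show ?thesis .
qed

lemma norm_lattice_ge: "\<omega> \<in> \<Lambda> \<Longrightarrow> \<omega> \<noteq> 0 \<Longrightarrow> lattice_scale \<le> norm \<omega>"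
proof -
  assume "\<omega> \<in> \<Lambda>" "\<omega> \<noteq> 0"
  then obtain m n where \<omega>: "\<omega> = lattice_point (m, n)"
    by (auto simp: lattice_eq_range)
  with \<open>\<omega> \<noteq> 0\<close> have "(m, n) \<noteq> (0, 0)"
    by (auto simp: lattice_point_def)
  then have "1 \<le> \<bar>real_of_int m\<bar> + \<bar>real_of_int n\<bar>" by auto
  then show ?thesis
    using norm_lattice_point_ge[of m n] lattice_scale_pos \<omega>
    by (smt (verit) mult_le_cancel_left1)
qed

lemma not_islimpt_lattice: "A \<subseteq> \<Lambda> \<Longrightarrow> \<not> p islimpt A"
  by (rule discrete_imp_not_islimpt[OF lattice_scale_pos])
     (use norm_lattice_ge lattice_diff in \<open>force simp: dist_norm\<close>)

lemma closed_lattice_subset: "A \<subseteq> \<Lambda> \<Longrightarrow> closed A"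
  using not_islimpt_lattice closed_limpt by blast

lemma open_lattice_compl: "A \<subseteq> \<Lambda> \<Longrightarrow> open (- A)"
  using closed_lattice_subset by blast

lemma eventually_not_in_lattice: "\<forall>\<^sub>F y in at p. y \<notin> \<Lambda>"
  using not_islimpt_lattice[of \<Lambda> p] by (simp add: islimpt_iff_eventually)

lemma finite_lattice_cball: "finite {\<omega>\<in>\<Lambda>. norm \<omega> \<le> R}"
proof -
  have "finite (cball 0 R \<inter> \<Lambda>)"
    by (rule finite_not_islimpt_in_compact) (use not_islimpt_lattice[of \<Lambda>] in auto)
  then show ?thesis by (rule finite_subset[rotated]) auto
qed

lemma countable_lattice: "countable \<Lambda>"
  by (simp add: lattice_eq_range)

lemma summable_on_lattice_inverse_cube: "(\<lambda>\<omega>. 1 / norm \<omega> ^ 3) summable_on (\<Lambda> - {0})"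
proof -
  define a where "a m = (1 + \<bar>real_of_int m\<bar>) powr - (3/2)" for m :: int
  have a: "a summable_on UNIV"
    unfolding a_def using summable_on_int_powr[of "3/2"] by simp
  have prod: "(\<lambda>(m, n). a m * a n) summable_on UNIV \<times> UNIV"
  proof (rule summable_on_SigmaI[where g="\<lambda>m. a m * infsum a UNIV"])
    fix m
    have "((\<lambda>n. a m * a n) has_sum a m * infsum a UNIV) UNIV"
      using a by (intro has_sum_cmult_right) (simp add: summable_iff_has_sum_infsum)
    then show "((\<lambda>n. case (m, n) of (m, n) \<Rightarrow> a m * a n) has_sum a m * infsum a UNIV) UNIV"
      by simp
  qed (use summable_on_cmult_left[OF a] in \<open>auto simp: a_def\<close>)
  have bound: "(\<lambda>mn. 8 / lattice_scale ^ 3 * (case mn of (m, n) \<Rightarrow> a m * a n))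
      summable_on UNIV - {(0, 0)}"
    by (rule summable_on_cmult_right, rule summable_on_subset_banach[OF prod]) auto
  have "((\<lambda>\<omega>. 1 / norm \<omega> ^ 3) \<circ> lattice_point) summable_on UNIV - {(0, 0)}"
  proof (rule summable_on_comparison_test[OF bound])
    fix mn :: "int \<times> int"
    assume "mn \<in> UNIV - {(0, 0)}"
    then obtain m n where mn: "mn = (m, n)" "(m, n) \<noteq> (0, 0)" by (cases mn) auto
    define s where "s = \<bar>real_of_int m\<bar> + \<bar>real_of_int n\<bar>"
    have s: "lattice_scale * s > 0"
      using mn lattice_scale_pos by (auto simp: s_def)
    have le: "lattice_scale * s \<le> norm (lattice_point (m, n))"
      using norm_lattice_point_ge[of m n] by (simp add: s_def)
    then have "1 / norm (lattice_point (m, n)) ^ 3 \<le> 1 / (lattice_scale * s) ^ 3"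
      using s by (intro divide_left_mono power_mono) (auto intro!: mult_pos_pos)
    also have "\<dots> = 1 / lattice_scale ^ 3 * (1 / s ^ 3)"
      by (simp add: power_mult_distrib)
    also have "\<dots> \<le> 1 / lattice_scale ^ 3 * (8 * (a m * a n))"
      using inverse_cube_le_powr_product[OF mn(2)] lattice_scale_pos
      by (intro mult_left_mono) (simp_all add: s_def a_def powr_mult)
    finally show "((\<lambda>\<omega>. 1 / norm \<omega> ^ 3) \<circ> lattice_point) mn
        \<le> 8 / lattice_scale ^ 3 * (case mn of (m, n) \<Rightarrow> a m * a n)"
      by (simp add: mn)
  qed simp
  then have "(\<lambda>\<omega>. 1 / norm \<omega> ^ 3) summable_on lattice_point ` (UNIV - {(0, 0)})"
    by (subst summable_on_reindex) (auto intro: inj_on_subset[OF inj_lattice_point])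
  moreover have "lattice_point ` (UNIV - {(0, 0)}) = \<Lambda> - {0}"
    using inj_lattice_point by (simp add: lattice_eq_range image_set_diff lattice_point_def)
  ultimately show ?thesis
    by simp
qed

end

section \<open>Termwise differentiation of lattice sums\<close>

lemma has_field_derivative_infsum:
  fixes f f' :: "'i \<Rightarrow> complex \<Rightarrow> complex" and M :: "'i \<Rightarrow> real"
  assumes S: "open S" "z \<in> S"
    and der: "\<And>i y. i \<in> I \<Longrightarrow> y \<in> S \<Longrightarrow> (f i has_field_derivative f' i y) (at y)"
    and bound: "\<And>i y. i \<in> I \<Longrightarrow> y \<in> S \<Longrightarrow> norm (f i y) \<le> M i"
    and M: "M summable_on I"
  shows "(\<lambda>i. f' i z) summable_on I"
    and "((\<lambda>y. \<Sum>\<^sub>\<infinity>i\<in>I. f i y) has_field_derivative (\<Sum>\<^sub>\<infinity>i\<in>I. f' i z)) (at z)"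
proof -
  define g where "g y = (\<Sum>\<^sub>\<infinity>i\<in>I. f i y)" for y
  have ulim: "uniform_limit S (\<lambda>X y. \<Sum>i\<in>X. f i y) g (finite_subsets_at_top I)"
    unfolding g_def by (rule Weierstrass_m_test_general[OF bound M])
  have holo: "\<forall>\<^sub>F X in finite_subsets_at_top I. (\<lambda>y. \<Sum>i\<in>X. f i y) holomorphic_on S"
    using der by (intro eventually_finite_subsets_at_top_weakI holomorphic_on_sum)
      (auto simp: holomorphic_on_open[OF S(1)])
  obtain r where r: "r > 0" "cball z r \<subseteq> S"
    using S open_contains_cball by blast
  then have ball: "ball z r \<subseteq> S"
    using ball_subset_cball by blast
  have "g holomorphic_on ball z r"
  proof (rule holomorphic_uniform_limit[OF _ uniform_limit_on_subset[OF ulim r(2)]])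
    show "\<forall>\<^sub>F X in finite_subsets_at_top I.
        continuous_on (cball z r) (\<lambda>y. \<Sum>i\<in>X. f i y) \<and> (\<lambda>y. \<Sum>i\<in>X. f i y) holomorphic_on ball z r"
      using holo by eventually_elim
        (use r ball in \<open>auto intro: holomorphic_on_imp_continuous_on holomorphic_on_subset\<close>)
  qed simp
  then have g: "(g has_field_derivative deriv g z) (at z)"
    using r by (intro holomorphic_derivI[of g "ball z r"]) auto
  have "((\<lambda>X. deriv (\<lambda>y. \<Sum>i\<in>X. f i y) z) \<longlongrightarrow> deriv g z) (finite_subsets_at_top I)"
    by (rule deriv_complex_uniform_limit[OF ulim holo _ S]) simp
  moreover have "\<forall>\<^sub>F X in finite_subsets_at_top I. deriv (\<lambda>y. \<Sum>i\<in>X. f i y) z = (\<Sum>i\<in>X. f' i z)"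
    using der S(2) by (intro eventually_finite_subsets_at_top_weakI DERIV_imp_deriv DERIV_sum) auto
  ultimately have "((\<lambda>i. f' i z) has_sum deriv g z) I"
    unfolding has_sum_def by (rule Lim_transform_eventually)
  then show "(\<lambda>i. f' i z) summable_on I" and
    "((\<lambda>y. \<Sum>\<^sub>\<infinity>i\<in>I. f i y) has_field_derivative (\<Sum>\<^sub>\<infinity>i\<in>I. f' i z)) (at z)"
    using g by (auto simp: summable_on_def infsumI g_def[abs_def])
qed

lemma has_field_derivative_infsum_cofinite:
  fixes f f' :: "'i \<Rightarrow> complex \<Rightarrow> complex" and M :: "'i \<Rightarrow> real"
  assumes S: "open S" "z \<in> S" and F: "finite F"
    and der: "\<And>i y. i \<in> I \<Longrightarrow> y \<in> S \<Longrightarrow> (f i has_field_derivative f' i y) (at y)"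
    and bound: "\<And>i y. i \<in> I - F \<Longrightarrow> y \<in> S \<Longrightarrow> norm (f i y) \<le> M i"
    and M: "M summable_on I - F"
  shows "(\<lambda>i. f' i z) summable_on I"
    and "((\<lambda>y. \<Sum>\<^sub>\<infinity>i\<in>I. f i y) has_field_derivative (\<Sum>\<^sub>\<infinity>i\<in>I. f' i z)) (at z)"
proof -
  have der': "\<And>i y. i \<in> I - F \<Longrightarrow> y \<in> S \<Longrightarrow> (f i has_field_derivative f' i y) (at y)"
    using der by blast
  note tail = has_field_derivative_infsum[OF S der' bound M]
  have split: "(\<Sum>\<^sub>\<infinity>i\<in>I. h i) = (\<Sum>i\<in>I \<inter> F. h i) + (\<Sum>\<^sub>\<infinity>i\<in>I - F. h i)"
    if "h summable_on I - F" for h :: "'i \<Rightarrow> complex"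
    using infsum_Un_disjoint[of h "I \<inter> F" "I - F"] that F by (auto simp: Int_Diff_Un)
  show "(\<lambda>i. f' i z) summable_on I"
    using summable_on_union[OF _ tail(1), where A = "I \<inter> F"] F by (simp add: Int_Diff_Un)
  have "((\<lambda>y. (\<Sum>i\<in>I \<inter> F. f i y) + (\<Sum>\<^sub>\<infinity>i\<in>I - F. f i y)) has_field_derivative
          (\<Sum>i\<in>I \<inter> F. f' i z) + (\<Sum>\<^sub>\<infinity>i\<in>I - F. f' i z)) (at z)"
    using der S(2) by (intro DERIV_add DERIV_sum tail(2)) auto
  then have "((\<lambda>y. (\<Sum>i\<in>I \<inter> F. f i y) + (\<Sum>\<^sub>\<infinity>i\<in>I - F. f i y)) has_field_derivative
          (\<Sum>\<^sub>\<infinity>i\<in>I. f' i z)) (at z)"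
    by (simp only: split[OF tail(1)])
  then show "((\<lambda>y. \<Sum>\<^sub>\<infinity>i\<in>I. f i y) has_field_derivative (\<Sum>\<^sub>\<infinity>i\<in>I. f' i z)) (at z)"
  proof (rule has_field_derivative_transform_within_open[OF _ S])
    fix y assume "y \<in> S"
    then have "(\<lambda>i. norm (f i y)) summable_on I - F"
      using bound by (intro summable_on_comparison_test[OF M]) auto
    then show "(\<Sum>i\<in>I \<inter> F. f i y) + (\<Sum>\<^sub>\<infinity>i\<in>I - F. f i y) = (\<Sum>\<^sub>\<infinity>i\<in>I. f i y)"
      by (simp add: split abs_summable_summable)
  qed
qed

lemma norm_wp_term_le:
  fixes z \<omega> :: complex
  assumes z: "norm z \<le> R" and \<omega>: "2 * R \<le> norm \<omega>" "\<omega> \<noteq> 0"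
  shows "norm (1 / (z - \<omega>)\<^sup>2 - 1 / \<omega>\<^sup>2) \<le> 10 * R / norm \<omega> ^ 3"
proof -
  define a where "a = norm \<omega>"
  have R: "0 \<le> R" using z norm_ge_zero order_trans by blast
  have a: "a > 0" using \<omega> by (simp add: a_def)
  have "a - norm z \<le> norm (z - \<omega>)"
    using norm_triangle_ineq2[of \<omega> z] by (simp add: a_def norm_minus_commute)
  then have d: "a / 2 \<le> norm (z - \<omega>)" using z \<omega> by (simp add: a_def)
  have "1 / (z - \<omega>)\<^sup>2 - 1 / \<omega>\<^sup>2 = z * (2 * \<omega> - z) / (\<omega>\<^sup>2 * (z - \<omega>)\<^sup>2)"
    using d a \<omega> by (auto simp: divide_simps) (simp add: power2_eq_square algebra_simps)
  then have "norm (1 / (z - \<omega>)\<^sup>2 - 1 / \<omega>\<^sup>2) = norm z * norm (2 * \<omega> - z) / (a\<^sup>2 * (norm (z - \<omega>))\<^sup>2)"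
    by (simp add: norm_mult norm_divide norm_power a_def)
  also have "\<dots> \<le> (R * (5 / 2 * a)) / (a\<^sup>2 * (a / 2)\<^sup>2)"
    using norm_triangle_ineq4[of "2 * \<omega>" z] z \<omega> d a R
    by (intro frac_le mult_mono mult_left_mono power_mono) (auto simp: a_def norm_mult)
  also have "\<dots> = 10 * R / a ^ 3"
    using a by (simp add: field_simps power2_eq_square power3_eq_cube)
  finally show ?thesis by (simp add: a_def)
qed

lemma norm_wzeta_term_le:
  fixes z \<omega> :: complex
  assumes z: "norm z \<le> R" and \<omega>: "2 * R \<le> norm \<omega>" "\<omega> \<noteq> 0"
  shows "norm (1 / (z - \<omega>) + 1 / \<omega> + z / \<omega>\<^sup>2) \<le> 2 * R\<^sup>2 / norm \<omega> ^ 3"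
proof -
  define a where "a = norm \<omega>"
  have R: "0 \<le> R" using z norm_ge_zero order_trans by blast
  have a: "a > 0" using \<omega> by (simp add: a_def)
  have "a - norm z \<le> norm (z - \<omega>)"
    using norm_triangle_ineq2[of \<omega> z] by (simp add: a_def norm_minus_commute)
  then have d: "a / 2 \<le> norm (z - \<omega>)" using z \<omega> by (simp add: a_def)
  have "1 / (z - \<omega>) + 1 / \<omega> + z / \<omega>\<^sup>2 = z\<^sup>2 / (\<omega>\<^sup>2 * (z - \<omega>))"
    using d a \<omega> by (auto simp: divide_simps) (simp add: power2_eq_square algebra_simps)
  then have "norm (1 / (z - \<omega>) + 1 / \<omega> + z / \<omega>\<^sup>2) = norm z ^ 2 / (a\<^sup>2 * norm (z - \<omega>))"
    by (simp add: norm_mult norm_divide norm_power a_def)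
  also have "\<dots> \<le> R\<^sup>2 / (a\<^sup>2 * (a / 2))"
    using z d a R by (intro frac_le mult_left_mono power_mono) auto
  also have "\<dots> = 2 * R\<^sup>2 / a ^ 3"
    using a by (simp add: field_simps power2_eq_square power3_eq_cube)
  finally show ?thesis by (simp add: a_def)
qed

lemma has_field_derivative_wp_term:
  fixes z \<omega> :: complex
  assumes "z \<noteq> \<omega>"
  shows "((\<lambda>z. 1 / (z - \<omega>)\<^sup>2 - 1 / \<omega>\<^sup>2) has_field_derivative -2 / (z - \<omega>) ^ 3) (at z)"
proof -
  define D where "D d = - (inverse (d\<^sup>2) * (of_nat 2 * ((1 - 0) * d ^ (2 - Suc 0))) * inverse (d\<^sup>2)) - 0"
    for d :: complex
  have "((\<lambda>z. inverse ((z - \<omega>)\<^sup>2) - 1 / \<omega>\<^sup>2) has_field_derivative D (z - \<omega>)) (at z)"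
    unfolding D_def using assms by (intro derivative_intros) auto
  moreover have "D d = -2 / d ^ 3" if "d \<noteq> 0" for d
    using that by (simp add: D_def field_simps eval_nat_numeral)
  ultimately show ?thesis
    using assms by (simp add: inverse_eq_divide)
qed

lemma has_field_derivative_wzeta_term:
  fixes z \<omega> :: complex
  assumes "z \<noteq> \<omega>"
  shows "((\<lambda>z. 1 / (z - \<omega>) + 1 / \<omega> + z / \<omega>\<^sup>2) has_field_derivative
           - (1 / (z - \<omega>)\<^sup>2 - 1 / \<omega>\<^sup>2)) (at z)"
proof -
  have "((\<lambda>z. inverse (z - \<omega>) + 1 / \<omega> + z * inverse (\<omega>\<^sup>2)) has_field_derivative
          - (inverse (z - \<omega>) * (1 - 0) * inverse (z - \<omega>)) + 0 + 1 * inverse (\<omega>\<^sup>2)) (at z)"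
    using assms by (intro derivative_intros DERIV_cmult_right DERIV_ident) auto
  moreover have "- (inverse (z - \<omega>) * (1 - 0) * inverse (z - \<omega>)) + 0 + 1 * inverse (\<omega>\<^sup>2)
      = - (1 / (z - \<omega>)\<^sup>2 - 1 / \<omega>\<^sup>2)"
    by (simp add: field_simps power2_eq_square)
  ultimately show ?thesis
    by (simp add: inverse_eq_divide)
qed

context period_lattice
begin

lemma has_field_derivative_lattice_sum:
  fixes f f' :: "complex \<Rightarrow> complex \<Rightarrow> complex" and C :: "real \<Rightarrow> real"
  assumes der: "\<And>\<omega> y. \<omega> \<in> \<Lambda> - {0} \<Longrightarrow> y \<noteq> \<omega> \<Longrightarrow> (f \<omega> has_field_derivative f' \<omega> y) (at y)"
    and bound: "\<And>\<omega> y R. norm y \<le> R \<Longrightarrow> 2 * R \<le> norm \<omega> \<Longrightarrow> \<omega> \<noteq> 0 \<Longrightarrow>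
                  norm (f \<omega> y) \<le> C R / norm \<omega> ^ 3"
    and z: "z \<notin> \<Lambda> - {0}"
  shows "(\<lambda>\<omega>. f' \<omega> z) summable_on \<Lambda> - {0}"
    and "((\<lambda>y. \<Sum>\<^sub>\<infinity>\<omega>\<in>\<Lambda>-{0}. f \<omega> y) has_field_derivative (\<Sum>\<^sub>\<infinity>\<omega>\<in>\<Lambda>-{0}. f' \<omega> z)) (at z)"
proof -
  define R where "R = norm z + 1"
  define S where "S = ball 0 R - (\<Lambda> - {0})"
  define F where "F = {\<omega>\<in>\<Lambda>. norm \<omega> \<le> 2 * R}"
  have S: "open S" "z \<in> S"
    using z closed_lattice_subset[of "\<Lambda> - {0}"] by (auto simp: S_def R_def)
  have F: "finite F"
    unfolding F_def by (rule finite_lattice_cball)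
  have M: "(\<lambda>\<omega>. C R * (1 / norm \<omega> ^ 3)) summable_on \<Lambda> - {0} - F"
    by (intro summable_on_cmult_right summable_on_subset_banach[OF summable_on_lattice_inverse_cube]) auto
  have der': "\<And>\<omega> y. \<omega> \<in> \<Lambda> - {0} \<Longrightarrow> y \<in> S \<Longrightarrow> (f \<omega> has_field_derivative f' \<omega> y) (at y)"
    by (auto simp: S_def intro!: der)
  have bound': "\<And>\<omega> y. \<omega> \<in> \<Lambda> - {0} - F \<Longrightarrow> y \<in> S \<Longrightarrow> norm (f \<omega> y) \<le> C R * (1 / norm \<omega> ^ 3)"
    using bound by (auto simp: S_def F_def)
  note sum = has_field_derivative_infsum_cofinite[OF S F der' bound' M]
  show "(\<lambda>\<omega>. f' \<omega> z) summable_on \<Lambda> - {0}"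
    by (rule sum(1))
  show "((\<lambda>y. \<Sum>\<^sub>\<infinity>\<omega>\<in>\<Lambda>-{0}. f \<omega> y) has_field_derivative (\<Sum>\<^sub>\<infinity>\<omega>\<in>\<Lambda>-{0}. f' \<omega> z)) (at z)"
    by (rule sum(2))
qed

section \<open>The Weierstrass functions\<close>

definition wp_tail :: "complex \<Rightarrow> complex" where
  "wp_tail z = (\<Sum>\<^sub>\<infinity>\<omega>\<in>\<Lambda>-{0}. 1 / (z - \<omega>)\<^sup>2 - 1 / \<omega>\<^sup>2)"

definition wzeta_tail :: "complex \<Rightarrow> complex" where
  "wzeta_tail z = (\<Sum>\<^sub>\<infinity>\<omega>\<in>\<Lambda>-{0}. 1 / (z - \<omega>) + 1 / \<omega> + z / \<omega>\<^sup>2)"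

definition wp_tail' :: "complex \<Rightarrow> complex" where
  "wp_tail' z = (\<Sum>\<^sub>\<infinity>\<omega>\<in>\<Lambda>-{0}. -2 / (z - \<omega>) ^ 3)"

definition wp' :: "complex \<Rightarrow> complex" where
  "wp' z = -2 / z ^ 3 + wp_tail' z"

lemma wp_eq: "wp w1 w2 z = 1 / z\<^sup>2 + wp_tail z"
  by (simp add: wp_def wp_tail_def)

lemma wzeta_eq: "wzeta w1 w2 z = 1 / z + wzeta_tail z"
  by (simp add: wzeta_def wzeta_tail_def)

lemma wp_tail_has_derivative:
  assumes "z \<notin> \<Lambda> - {0}"
  shows "(\<lambda>\<omega>. -2 / (z - \<omega>) ^ 3) summable_on \<Lambda> - {0}"
    and "(wp_tail has_field_derivative wp_tail' z) (at z)"
  using has_field_derivative_lattice_sum[where C="\<lambda>R. 10 * R",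
      OF has_field_derivative_wp_term norm_wp_term_le assms]
  by (simp_all add: wp_tail_def[abs_def] wp_tail'_def)

lemma wzeta_tail_has_derivative:
  assumes "z \<notin> \<Lambda> - {0}"
  shows "(wzeta_tail has_field_derivative - wp_tail z) (at z)"
  using has_field_derivative_lattice_sum(2)[where C="\<lambda>R. 2 * R\<^sup>2",
      OF has_field_derivative_wzeta_term norm_wzeta_term_le assms]
  unfolding wzeta_tail_def[abs_def] wp_tail_def infsum_uminus .

lemma has_field_derivative_wp:
  assumes "z \<notin> \<Lambda>"
  shows "(wp w1 w2 has_field_derivative wp' z) (at z)"
proof -
  \<comment> \<open>The \<open>\<omega> = 0\<close> instance of the term is \<open>1 / z\<^sup>2\<close>, as \<open>1 / 0 = 0\<close>.\<close>
  have "((\<lambda>z. 1 / (z - 0)\<^sup>2 - 1 / 0\<^sup>2 + wp_tail z) has_field_derivative -2 / (z - 0) ^ 3 + wp_tail' z) (at z)"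
    using assms by (intro DERIV_add has_field_derivative_wp_term wp_tail_has_derivative) auto
  then show ?thesis by (simp add: wp_eq[abs_def] wp'_def)
qed

lemma has_field_derivative_wzeta:
  assumes "z \<notin> \<Lambda>"
  shows "(wzeta w1 w2 has_field_derivative - wp w1 w2 z) (at z)"
proof -
  have "((\<lambda>z. 1 / (z - 0) + 1 / 0 + z / 0\<^sup>2 + wzeta_tail z) has_field_derivative
           - (1 / (z - 0)\<^sup>2 - 1 / 0\<^sup>2) + - wp_tail z) (at z)"
    using assms by (intro DERIV_add has_field_derivative_wzeta_term wzeta_tail_has_derivative) auto
  then show ?thesis by (simp add: wzeta_eq[abs_def] wp_eq)
qed

lemma holomorphic_wp_tail: "wp_tail holomorphic_on - (\<Lambda> - {0})"
  using wp_tail_has_derivative(2)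
  by (subst holomorphic_on_open[OF open_lattice_compl[OF Diff_subset]]) blast

lemma holomorphic_wzeta_tail: "wzeta_tail holomorphic_on - (\<Lambda> - {0})"
  using wzeta_tail_has_derivative
  by (subst holomorphic_on_open[OF open_lattice_compl[OF Diff_subset]]) blast

lemma holomorphic_wp_tail': "wp_tail' holomorphic_on - (\<Lambda> - {0})"
proof -
  have "deriv wp_tail holomorphic_on - (\<Lambda> - {0})"
    by (intro holomorphic_deriv holomorphic_wp_tail open_lattice_compl) auto
  then show ?thesis
    by (rule holomorphic_transform) (use wp_tail_has_derivative(2) DERIV_imp_deriv in auto)
qed

lemma holomorphic_wp': "wp' holomorphic_on - \<Lambda>"
  unfolding wp'_def[abs_def]
  by (intro holomorphic_intros holomorphic_on_subset[OF holomorphic_wp_tail']) auto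

lemma holomorphic_wp: "wp w1 w2 holomorphic_on - \<Lambda>"
  using has_field_derivative_wp by (subst holomorphic_on_open[OF open_lattice_compl]) blast+

lemma holomorphic_wzeta: "wzeta w1 w2 holomorphic_on - \<Lambda>"
  using has_field_derivative_wzeta by (subst holomorphic_on_open[OF open_lattice_compl]) blast+

lemma wp_tail_0 [simp]: "wp_tail 0 = 0"
  unfolding wp_tail_def by (rule infsum_0) (simp add: power2_eq_square)

lemma wzeta_tail_0 [simp]: "wzeta_tail 0 = 0"
  unfolding wzeta_tail_def by (rule infsum_0) simp

lemma infsum_lattice_reflect:
  fixes g :: "complex \<Rightarrow> complex"
  shows "(\<Sum>\<^sub>\<infinity>\<omega>\<in>\<Lambda>-{0}. g (- \<omega>)) = (\<Sum>\<^sub>\<infinity>\<omega>\<in>\<Lambda>-{0}. g \<omega>)"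
  by (rule infsum_reindex_bij_witness[of _ uminus uminus]) auto

lemma wp_tail_minus: "wp_tail (- z) = wp_tail z"
  unfolding wp_tail_def
  by (subst infsum_lattice_reflect[symmetric]) (simp add: power2_eq_square algebra_simps)

lemma wzeta_tail_minus: "wzeta_tail (- z) = - wzeta_tail z"
proof -
  have "1 / (- z - - \<omega>) + 1 / - \<omega> + - z / (- \<omega>)\<^sup>2 = - (1 / (z - \<omega>) + 1 / \<omega> + z / \<omega>\<^sup>2)" for \<omega>
    by (simp add: divide_simps) (simp add: algebra_simps)
  then have "wzeta_tail (- z) = (\<Sum>\<^sub>\<infinity>\<omega>\<in>\<Lambda>-{0}. - (1 / (z - \<omega>) + 1 / \<omega> + z / \<omega>\<^sup>2))"
    unfolding wzeta_tail_def by (subst infsum_lattice_reflect[symmetric]) (simp only:)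
  then show ?thesis
    by (simp only: infsum_uminus wzeta_tail_def)
qed

lemma wp_tail'_minus: "wp_tail' (- z) = - wp_tail' z"
proof -
  have "(- z - - \<omega>) ^ 3 = - ((z - \<omega>) ^ 3)" for \<omega>
    by (simp add: power3_eq_cube algebra_simps)
  then have "wp_tail' (- z) = (\<Sum>\<^sub>\<infinity>\<omega>\<in>\<Lambda>-{0}. - (-2 / (z - \<omega>) ^ 3))"
    unfolding wp_tail'_def by (subst infsum_lattice_reflect[symmetric]) simp
  then show ?thesis
    by (simp only: infsum_uminus wp_tail'_def)
qed

lemma wp_minus: "wp w1 w2 (- z) = wp w1 w2 z"
  by (simp add: wp_eq wp_tail_minus)

lemma wzeta_minus: "wzeta w1 w2 (- z) = - wzeta w1 w2 z"
  by (simp add: wzeta_eq wzeta_tail_minus)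

lemma wp'_minus: "wp' (- z) = - wp' z"
  by (simp add: wp'_def wp_tail'_minus)

lemma wp'_eq_lattice_sum:
  assumes "z \<notin> \<Lambda>"
  shows "wp' z = (\<Sum>\<^sub>\<infinity>\<omega>\<in>\<Lambda>. -2 / (z - \<omega>) ^ 3)"
proof -
  have "(\<Sum>\<^sub>\<infinity>\<omega>\<in>insert 0 (\<Lambda> - {0}). -2 / (z - \<omega>) ^ 3) = -2 / (z - 0) ^ 3 + wp_tail' z"
    unfolding wp_tail'_def using assms by (intro infsum_insert wp_tail_has_derivative(1)) auto
  moreover have "insert 0 (\<Lambda> - {0}) = \<Lambda>" by auto
  ultimately show ?thesis by (simp add: wp'_def)
qed

lemma wp'_periodic:
  assumes "a \<in> \<Lambda>" "z \<notin> \<Lambda>"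
  shows "wp' (z + a) = wp' z"
proof -
  have "(\<Sum>\<^sub>\<infinity>\<omega>\<in>\<Lambda>. -2 / (z + a - \<omega>) ^ 3) = (\<Sum>\<^sub>\<infinity>\<omega>\<in>\<Lambda>. -2 / (z - \<omega>) ^ 3)"
    by (rule infsum_reindex_bij_witness[of _ "\<lambda>\<omega>. \<omega> + a" "\<lambda>\<omega>. \<omega> - a"])
       (use assms in \<open>simp_all add: lattice_add lattice_diff algebra_simps\<close>)
  then show ?thesis
    using assms by (simp add: wp'_eq_lattice_sum add_lattice_iff)
qed

lemma constant_on_lattice_compl:
  assumes "\<And>z. z \<notin> \<Lambda> \<Longrightarrow> (f has_field_derivative 0) (at z)"
  shows "f constant_on - \<Lambda>"
proof (rule DERIV_zero_connected_constant_on[OF _ open_lattice_compl finite.emptyI])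
  show "connected (- \<Lambda>)"
    using path_connected_complement_countable[OF _ countable_lattice]
    by (simp add: path_connected_imp_connected)
  show "continuous_on (- \<Lambda>) f"
    using assms by (intro continuous_at_imp_continuous_on) (auto intro: DERIV_isCont)
qed (use assms in auto)

lemma wp_periodic:
  assumes a: "a \<in> \<Lambda>" and z: "z \<notin> \<Lambda>"
  shows "wp w1 w2 (z + a) = wp w1 w2 z"
proof -
  have "((\<lambda>z. wp w1 w2 (z + a) - wp w1 w2 z) has_field_derivative 0) (at z)" if z: "z \<notin> \<Lambda>" for z
  proof -
    have "((\<lambda>z. wp w1 w2 (z + a) - wp w1 w2 z) has_field_derivative wp' (z + a) * (1 + 0) - wp' z) (at z)"
      using a z by (intro derivative_intros DERIV_chain2[OF has_field_derivative_wp] has_field_derivative_wp)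
        (auto simp: add_lattice_iff)
    then show ?thesis
      using a z by (simp add: wp'_periodic)
  qed
  then have "(\<lambda>z. wp w1 w2 (z + a) - wp w1 w2 z) constant_on - \<Lambda>"
    by (rule constant_on_lattice_compl)
  then obtain c where c: "\<And>z. z \<notin> \<Lambda> \<Longrightarrow> wp w1 w2 (z + a) - wp w1 w2 z = c"
    by (auto simp: constant_on_def)
  \<comment> \<open>The constant difference vanishes because \<open>\<wp>\<close> is even.\<close>
  have za: "- (z + a) \<notin> \<Lambda>"
    using z a by (simp only: lattice_uminus_iff add_lattice_iff not_False_eq_True)
  have "c = wp w1 w2 (- (z + a) + a) - wp w1 w2 (- (z + a))"
    by (rule c[OF za, symmetric])
  also have "- (z + a) + a = - z"
    by simp
  finally have "c = wp w1 w2 z - wp w1 w2 (z + a)"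
    by (simp only: wp_minus)
  with c[OF z] show ?thesis
    by simp
qed

lemma wzeta_quasi_periodic:
  assumes a: "a \<in> \<Lambda>"
  obtains \<eta> where "\<And>z. z \<notin> \<Lambda> \<Longrightarrow> wzeta w1 w2 (z + a) = wzeta w1 w2 z + \<eta>"
proof -
  have "((\<lambda>z. wzeta w1 w2 (z + a) - wzeta w1 w2 z) has_field_derivative 0) (at z)" if z: "z \<notin> \<Lambda>" for z
  proof -
    have "((\<lambda>z. wzeta w1 w2 (z + a) - wzeta w1 w2 z) has_field_derivative
             - wp w1 w2 (z + a) * (1 + 0) - - wp w1 w2 z) (at z)"
      using a z by (intro derivative_intros DERIV_chain2[OF has_field_derivative_wzeta] has_field_derivative_wzeta)
        (auto simp: add_lattice_iff)
    then show ?thesis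
      using a z by (simp add: wp_periodic)
  qed
  then have "(\<lambda>z. wzeta w1 w2 (z + a) - wzeta w1 w2 z) constant_on - \<Lambda>"
    by (rule constant_on_lattice_compl)
  then obtain c where "\<And>z. z \<notin> \<Lambda> \<Longrightarrow> wzeta w1 w2 (z + a) - wzeta w1 w2 z = c"
    by (auto simp: constant_on_def)
  then show ?thesis
    by (metis diff_add_cancel add.commute that)
qed

end

section \<open>Removable singularities and doubly periodic entire functions\<close>

lemma bigo_transform_eventually:
  "f \<in> O[F](h) \<Longrightarrow> \<forall>\<^sub>F x in F. f x = g x \<Longrightarrow> g \<in> O[F](h)"
  using landau_o.big.in_cong[of f g F h] by blast

lemma tendsto_imp_bigo_1: "(f \<longlongrightarrow> l) F \<Longrightarrow> f \<in> O[F](\<lambda>_. 1)"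
  for f :: "'a \<Rightarrow> 'b :: real_normed_field"
  by (rule bigoI_tendsto[where c = l]) simp_all

lemma isCont_imp_bigo_1: "isCont f p \<Longrightarrow> f \<in> O[at p](\<lambda>_. 1)"
  for f :: "'a :: t2_space \<Rightarrow> 'b :: real_normed_field"
  by (rule tendsto_imp_bigo_1) (simp add: isCont_def)

lemma isCont_holomorphic_on_open: "f holomorphic_on S \<Longrightarrow> open S \<Longrightarrow> z \<in> S \<Longrightarrow> isCont f z"
  by (rule continuous_on_interior[OF holomorphic_on_imp_continuous_on]) (auto simp: interior_open)

lemma holomorphic_divide_linear_bigo_1:
  assumes h: "h holomorphic_on ball p r" and r: "r > 0" and hp: "h p = 0"
  shows "(\<lambda>y. h y / (y - p)) \<in> O[at p](\<lambda>_. 1)"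
proof -
  define g where "g = (\<lambda>y. if y = p then deriv h p else (h y - h p) / (y - p))"
  have "g holomorphic_on ball p r"
    unfolding g_def by (rule pole_lemma[OF h]) (simp add: r)
  then have "isCont g p"
    using r by (intro isCont_holomorphic_on_open[of g "ball p r"]) auto
  then have "g \<in> O[at p](\<lambda>_. 1)"
    by (rule isCont_imp_bigo_1)
  moreover have "\<forall>\<^sub>F y in at p. g y = h y / (y - p)"
    by (rule eventually_mono[OF eventually_neq_at_within[of p]]) (simp add: g_def hp)
  ultimately show ?thesis
    by (rule bigo_transform_eventually)
qed

lemma holomorphic_divide_square_bigo_1:
  assumes h: "h holomorphic_on ball p r" and r: "r > 0" and hp: "h p = 0" "deriv h p = 0"
  shows "(\<lambda>y. h y / (y - p)\<^sup>2) \<in> O[at p](\<lambda>_. 1)"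
proof -
  define g where "g = (\<lambda>y. if y = p then deriv h p else (h y - h p) / (y - p))"
  have "g holomorphic_on ball p r"
    unfolding g_def by (rule pole_lemma[OF h]) (simp add: r)
  then have "(\<lambda>y. g y / (y - p)) \<in> O[at p](\<lambda>_. 1)"
    by (rule holomorphic_divide_linear_bigo_1[OF _ r]) (simp add: g_def hp)
  moreover have "\<forall>\<^sub>F y in at p. g y / (y - p) = h y / (y - p)\<^sup>2"
    by (rule eventually_mono[OF eventually_neq_at_within[of p]]) (simp add: g_def hp power2_eq_square)
  ultimately show ?thesis
    by (rule bigo_transform_eventually)
qed

lemma bounded_isolated_singularity_has_limit:
  fixes F :: "complex \<Rightarrow> complex"
  assumes F: "F holomorphic_on ball p d - {p}" and d: "d > 0" and bounded: "F \<in> O[at p](\<lambda>_. 1)"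
  shows "\<exists>l. (F \<longlongrightarrow> l) (at p)"
proof -
  obtain c where "\<forall>\<^sub>F y in at p. norm (F y) \<le> c"
    using bounded by (auto elim!: landau_o.bigE)
  then obtain h where h: "h holomorphic_on ball p d" "\<And>y. y \<in> ball p d - {p} \<Longrightarrow> h y = F y"
    using holomorphic_on_extend_bounded[of F "ball p d" p] F d by auto
  have "isCont h p"
    using h(1) d by (intro isCont_holomorphic_on_open[of h "ball p d"]) auto
  moreover have "\<forall>\<^sub>F y in at p. h y = F y"
    using eventually_at_ball'[OF d, of p UNIV] by eventually_elim (use h(2) in auto)
  ultimately have "(F \<longlongrightarrow> h p) (at p)"
    unfolding isCont_def by (rule Lim_transform_eventually)
  then show ?thesis ..
qed

lemma entire_extension:
  fixes F :: "complex \<Rightarrow> complex" and S :: "complex set"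
  assumes S: "\<And>p. \<forall>\<^sub>F y in at p. y \<notin> S"
    and F: "F holomorphic_on - S"
    and bounded: "\<And>p. F \<in> O[at p](\<lambda>_. 1)"
  obtains g where "g holomorphic_on UNIV" "\<And>y. y \<notin> S \<Longrightarrow> g y = F y"
proof
  define g where "g y = (if y \<in> S then Lim (at y) F else F y)" for y
  have "closed S"
    using S by (simp add: closed_limpt islimpt_iff_eventually)
  then have open_S: "open (- S)"
    by (rule open_Compl)
  have "\<exists>D. (g has_field_derivative D) (at p)" for p
  proof (cases "p \<in> S")
    case False
    then obtain D where "(F has_field_derivative D) (at p)"
      using F by (auto simp: holomorphic_on_open[OF open_S])
    then have "(g has_field_derivative D) (at p)"
      by (rule has_field_derivative_transform_within_open[OF _ open_S]) (use False in \<open>auto simp: g_def\<close>)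
    then show ?thesis ..
  next
    case True
    obtain d where d: "d > 0" "\<And>y. y \<in> ball p d - {p} \<Longrightarrow> y \<notin> S"
      using S[of p] by (auto simp: eventually_at dist_commute)
    have "F holomorphic_on ball p d - {p}"
      by (rule holomorphic_on_subset[OF F]) (use d in auto)
    moreover obtain l where l: "(F \<longlongrightarrow> l) (at p)"
      using bounded_isolated_singularity_has_limit[OF calculation d(1) bounded] by blast
    ultimately have "(\<lambda>y. if y = p then l else F y) holomorphic_on ball p d"
      by (intro removable_singularity) auto
    then obtain D where D: "((\<lambda>y. if y = p then l else F y) has_field_derivative D) (at p)"
      using d(1) by (force simp: holomorphic_on_open)
    have "(g has_field_derivative D) (at p)"
      by (rule has_field_derivative_transform_within_open[OF D open_ball[of p d]])
         (use d True l in \<open>auto simp: g_def tendsto_Lim\<close>)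
    then show ?thesis ..
  qed
  then show "g holomorphic_on UNIV"
    by (simp add: holomorphic_on_open)
  show "g y = F y" if "y \<notin> S" for y
    using that by (simp add: g_def)
qed

context period_lattice
begin

definition fundamental_parallelogram :: "complex set" where
  "fundamental_parallelogram = (\<lambda>(s, t). of_real s * w1 + of_real t * w2) ` ({0..1} \<times> {0..1})"

lemma compact_fundamental_parallelogram: "compact fundamental_parallelogram"
  unfolding fundamental_parallelogram_def
  by (intro compact_continuous_image compact_Times compact_Icc) (auto intro!: continuous_intros simp: case_prod_beta)

lemma lattice_translate_into_fundamental_parallelogram:
  obtains a where "a \<in> \<Lambda>" "y - a \<in> fundamental_parallelogram"
proof -
  define \<tau> where "\<tau> = w2 / w1"
  define t where "t = Im (y / w1) / Im \<tau>"
  define s where "s = Re (y / w1) - t * Re \<tau>"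
  have "Im \<tau> \<noteq> 0"
    using nondeg by (simp add: \<tau>_def)
  then have "of_real s + of_real t * \<tau> = y / w1"
    by (intro complex_eqI) (simp_all add: s_def t_def)
  then have y: "y = of_real s * w1 + of_real t * w2"
    using w1_nonzero by (simp add: \<tau>_def field_simps)
  define a where "a = of_int \<lfloor>s\<rfloor> * w1 + of_int \<lfloor>t\<rfloor> * w2"
  have "a \<in> \<Lambda>"
    unfolding a_def mem_lattice_iff by blast
  moreover have "y - a = of_real (frac s) * w1 + of_real (frac t) * w2"
    by (simp add: y a_def frac_def algebra_simps)
  then have "y - a \<in> fundamental_parallelogram"
    unfolding fundamental_parallelogram_def
    by (auto intro!: image_eqI[of _ _ "(frac s, frac t)"] less_imp_le[OF frac_lt_1])
  ultimately show ?thesis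
    using that by blast
qed

lemma entire_periodic_constant:
  assumes g: "g holomorphic_on UNIV" and periodic: "\<And>z a. a \<in> \<Lambda> \<Longrightarrow> g (z + a) = g z"
  shows "g constant_on UNIV"
proof (rule Liouville_theorem[OF g])
  have "compact (g ` fundamental_parallelogram)"
    using g by (intro compact_continuous_image compact_fundamental_parallelogram
        holomorphic_on_imp_continuous_on holomorphic_on_subset[OF g]) auto
  then obtain B where B: "\<And>y. y \<in> fundamental_parallelogram \<Longrightarrow> norm (g y) \<le> B"
    by (meson bounded_iff compact_imp_bounded imageI)
  have "norm (g y) \<le> B" for y
  proof -
    obtain a where "a \<in> \<Lambda>" "y - a \<in> fundamental_parallelogram"
      by (rule lattice_translate_into_fundamental_parallelogram)
    then show ?thesis
      using B periodic[of a "y - a"] by simp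
  qed
  then show "bounded (range g)"
    by (auto simp: bounded_iff)
qed

section \<open>The addition formula\<close>

lemma wzeta_times_linear_bigo_1: "(\<lambda>y. wzeta w1 w2 (y + c) * (y - p)) \<in> O[at p](\<lambda>_. 1)"
proof (cases "p + c \<in> \<Lambda>")
  case False
  have "isCont (\<lambda>y. wzeta w1 w2 (y + c) * (y - p)) p"
    using False
    by (intro continuous_intros isCont_o2[OF _ isCont_holomorphic_on_open[OF holomorphic_wzeta]]
        open_lattice_compl) auto
  then show ?thesis
    by (rule isCont_imp_bigo_1)
next
  case True
  \<comment> \<open>Near a lattice point the zeta function is a simple pole plus a holomorphic tail.\<close>
  obtain \<eta> where \<eta>: "\<And>z. z \<notin> \<Lambda> \<Longrightarrow> wzeta w1 w2 (z + (p + c)) = wzeta w1 w2 z + \<eta>"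
    using wzeta_quasi_periodic[OF True] by blast
  have "isCont (\<lambda>y. 1 + (wzeta_tail (y - p) + \<eta>) * (y - p)) p"
    by (intro continuous_intros isCont_o2[OF _ isCont_holomorphic_on_open[OF holomorphic_wzeta_tail]]
        open_lattice_compl) auto
  then have "(\<lambda>y. 1 + (wzeta_tail (y - p) + \<eta>) * (y - p)) \<in> O[at p](\<lambda>_. 1)"
    by (rule isCont_imp_bigo_1)
  moreover have "\<forall>\<^sub>F y in at p. 1 + (wzeta_tail (y - p) + \<eta>) * (y - p) = wzeta w1 w2 (y + c) * (y - p)"
  proof -
    have "\<forall>\<^sub>F y in at p. y - p \<notin> \<Lambda>"
      using eventually_not_in_lattice[of 0] by (simp add: eventually_at_to_0[of _ p])
    then show ?thesis
    proof (rule eventually_mono[OF eventually_conj[OF _ eventually_neq_at_within[of p]]], clarify)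
      fix y assume y: "y - p \<notin> \<Lambda>" "y \<noteq> p"
      have "wzeta w1 w2 (y + c) = wzeta w1 w2 ((y - p) + (p + c))" by simp
      also have "\<dots> = 1 / (y - p) + wzeta_tail (y - p) + \<eta>"
        using \<eta>[OF y(1)] by (simp add: wzeta_eq)
      finally show "1 + (wzeta_tail (y - p) + \<eta>) * (y - p) = wzeta w1 w2 (y + c) * (y - p)"
        using y(2) by (simp add: field_simps)
    qed
  qed
  ultimately show ?thesis
    by (rule bigo_transform_eventually)
qed

lemma wzeta_shifted_sum_second_order:
  assumes d: "d > 0" and avoid: "\<And>y. y \<in> ball 0 d \<Longrightarrow> y + x \<notin> \<Lambda> \<and> y - x \<notin> \<Lambda>"
  shows "(\<lambda>y. wzeta w1 w2 (y + x) + wzeta w1 w2 (y - x)) holomorphic_on ball 0 d"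
    and "(\<lambda>y. wzeta w1 w2 (y + x) + wzeta w1 w2 (y - x) + 2 * wp w1 w2 x * y) holomorphic_on ball 0 d"
    and "wzeta w1 w2 (0 + x) + wzeta w1 w2 (0 - x) + 2 * wp w1 w2 x * 0 = 0"
    and "deriv (\<lambda>y. wzeta w1 w2 (y + x) + wzeta w1 w2 (y - x) + 2 * wp w1 w2 x * y) 0 = 0"
proof -
  have D: "((\<lambda>y. wzeta w1 w2 (y + x) + wzeta w1 w2 (y - x)) has_field_derivative
            - wp w1 w2 (y + x) * (1 + 0) + - wp w1 w2 (y - x) * (1 - 0)) (at y)" if "y \<in> ball 0 d" for y
    using avoid[OF that] by (intro derivative_intros DERIV_chain2[OF has_field_derivative_wzeta]) auto
  then show H: "(\<lambda>y. wzeta w1 w2 (y + x) + wzeta w1 w2 (y - x)) holomorphic_on ball 0 d"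
    by (subst holomorphic_on_open) blast+
  then show "(\<lambda>y. wzeta w1 w2 (y + x) + wzeta w1 w2 (y - x) + 2 * wp w1 w2 x * y) holomorphic_on ball 0 d"
    by (rule holomorphic_on_add) (intro holomorphic_intros)
  show "wzeta w1 w2 (0 + x) + wzeta w1 w2 (0 - x) + 2 * wp w1 w2 x * 0 = 0"
    by (simp add: wzeta_minus[of x])
  \<comment> \<open>\<open>\<zeta>\<close> is odd and \<open>\<wp>\<close> is even, so the linear term cancels too.\<close>
  have "((\<lambda>y. wzeta w1 w2 (y + x) + wzeta w1 w2 (y - x) + 2 * wp w1 w2 x * y) has_field_derivative
          (- wp w1 w2 (0 + x) * (1 + 0) + - wp w1 w2 (0 - x) * (1 - 0)) + 2 * wp w1 w2 x * 1) (at 0)"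
    using d by (intro derivative_intros D) auto
  then show "deriv (\<lambda>y. wzeta w1 w2 (y + x) + wzeta w1 w2 (y - x) + 2 * wp w1 w2 x * y) 0 = 0"
    by (simp add: DERIV_imp_deriv wp_minus[of x])
qed

end

locale wp_addition = period_lattice +
  fixes x :: complex
  assumes x_notin_lattice: "x \<notin> \<Lambda>"
begin

definition addition_poles :: "complex set" where
  "addition_poles = {y. y \<in> \<Lambda> \<or> y + x \<in> \<Lambda> \<or> y - x \<in> \<Lambda>}"

definition addition_defect :: "complex \<Rightarrow> complex" where
  "addition_defect y =
     (wzeta w1 w2 (y + x) + wzeta w1 w2 (y - x) - 2 * wzeta w1 w2 y) * (wp w1 w2 y - wp w1 w2 x) - wp' y"

lemma notin_addition_poles_iff: "y \<notin> addition_poles \<longleftrightarrow> y \<notin> \<Lambda> \<and> y + x \<notin> \<Lambda> \<and> y - x \<notin> \<Lambda>"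
  by (simp add: addition_poles_def)

lemma eventually_notin_addition_poles: "\<forall>\<^sub>F y in at p. y \<notin> addition_poles"
proof -
  have shift: "\<forall>\<^sub>F y in at p. y + c \<notin> \<Lambda>" for c
    using eventually_not_in_lattice[of "p + c"]
    by (simp add: eventually_at_to_0[of _ "p + c"] eventually_at_to_0[of _ p] add.assoc)
  show ?thesis
    using eventually_not_in_lattice[of p] shift[of x] shift[of "- x"]
    by eventually_elim (simp add: notin_addition_poles_iff)
qed

lemma holomorphic_addition_defect: "addition_defect holomorphic_on - addition_poles"
proof -
  have shifted: "(\<lambda>y. wzeta w1 w2 (y + c)) holomorphic_on - addition_poles"
    if "\<And>y. y \<notin> addition_poles \<Longrightarrow> y + c \<notin> \<Lambda>" for c
    using that by (intro holomorphic_on_compose_gen[of "\<lambda>y. y + c" _ "wzeta w1 w2" "- \<Lambda>", unfolded o_def]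
        holomorphic_intros holomorphic_wzeta) auto
  have "- addition_poles \<subseteq> - \<Lambda>"
    by (auto simp: addition_poles_def)
  then show ?thesis
    unfolding addition_defect_def[abs_def]
    using shifted[of x] shifted[of "- x"]
    by (intro holomorphic_intros holomorphic_on_subset[OF holomorphic_wzeta]
        holomorphic_on_subset[OF holomorphic_wp] holomorphic_on_subset[OF holomorphic_wp'])
       (auto simp: notin_addition_poles_iff)
qed

lemma addition_defect_periodic:
  assumes a: "a \<in> \<Lambda>" and y: "y \<notin> addition_poles"
  shows "y + a \<notin> addition_poles" and "addition_defect (y + a) = addition_defect y"
proof -
  have y': "y \<notin> \<Lambda>" "y + x \<notin> \<Lambda>" "y - x \<notin> \<Lambda>"
    using y by (auto simp: notin_addition_poles_iff)
  have eq: "y + a + x = (y + x) + a" "y + a - x = (y - x) + a"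
    by (simp_all add: algebra_simps)
  show "y + a \<notin> addition_poles"
    using y' a by (simp add: notin_addition_poles_iff eq add_lattice_iff)
  obtain \<eta> where \<eta>: "\<And>z. z \<notin> \<Lambda> \<Longrightarrow> wzeta w1 w2 (z + a) = wzeta w1 w2 z + \<eta>"
    using wzeta_quasi_periodic[OF a] by blast
  show "addition_defect (y + a) = addition_defect y"
    unfolding addition_defect_def eq
    using \<eta>[OF y'(1)] \<eta>[OF y'(2)] \<eta>[OF y'(3)] wp_periodic[OF a y'(1)] wp'_periodic[OF a y'(1)]
    by (simp add: algebra_simps)
qed

lemma addition_defect_minus:
  assumes y: "y \<notin> addition_poles"
  shows "- y \<notin> addition_poles" and "addition_defect (- y) = - addition_defect y"
proof -
  have eq: "- y + x = - (y - x)" "- y - x = - (y + x)"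
    by simp_all
  show "- y \<notin> addition_poles"
    using y unfolding notin_addition_poles_iff eq lattice_uminus_iff by simp
  show "addition_defect (- y) = - addition_defect y"
    unfolding addition_defect_def eq wzeta_minus wp_minus wp'_minus by (simp add: algebra_simps)
qed

lemma wp_eq_at_addition_pole:
  assumes "p \<in> addition_poles" "p \<notin> \<Lambda>"
  shows "wp w1 w2 p = wp w1 w2 x"
proof (cases "p + x \<in> \<Lambda>")
  case True
  have "wp w1 w2 p = wp w1 w2 (- x + (p + x))" by simp
  also have "\<dots> = wp w1 w2 x"
    using wp_periodic[OF True, of "- x"] x_notin_lattice by (simp add: wp_minus)
  finally show ?thesis .
next
  case False
  with assms have "p - x \<in> \<Lambda>"
    by (auto simp: addition_poles_def)
  from wp_periodic[OF this x_notin_lattice] show ?thesis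
    by simp
qed

lemma addition_defect_bigo_1_off_lattice:
  assumes p: "p \<in> addition_poles" "p \<notin> \<Lambda>"
  shows "addition_defect \<in> O[at p](\<lambda>_. 1)"
proof -
  \<comment> \<open>\<open>\<wp> - \<wp>(x)\<close> has a zero at \<open>p\<close> that cancels the simple poles of the zeta terms.\<close>
  define q where "q y = (wp w1 w2 y - wp w1 w2 p) / (y - p)" for y
  have "(q \<longlongrightarrow> wp' p) (at p)"
    using has_field_derivative_wp[OF p(2)] unfolding has_field_derivative_iff q_def by simp
  then have "q \<in> O[at p](\<lambda>_. 1)"
    by (rule tendsto_imp_bigo_1)
  moreover have "wp' \<in> O[at p](\<lambda>_. 1)"
    using p(2) by (intro isCont_imp_bigo_1 isCont_holomorphic_on_open[OF holomorphic_wp' open_lattice_compl]) auto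
  ultimately have "(\<lambda>y. (wzeta w1 w2 (y + x) * (y - p) + wzeta w1 w2 (y + - x) * (y - p)
                 - 2 * (wzeta w1 w2 (y + 0) * (y - p))) * q y - wp' y) \<in> O[at p](\<lambda>_. 1)"
    by (intro wzeta_times_linear_bigo_1 sum_in_bigo landau_o.big.mult_in_1 bigo_const)
  moreover have "\<forall>\<^sub>F y in at p. (wzeta w1 w2 (y + x) * (y - p) + wzeta w1 w2 (y + - x) * (y - p)
                 - 2 * (wzeta w1 w2 (y + 0) * (y - p))) * q y - wp' y = addition_defect y"
    by (rule eventually_mono[OF eventually_neq_at_within[of p]])
       (simp add: addition_defect_def q_def wp_eq_at_addition_pole[OF p] field_simps)
  ultimately show ?thesis
    by (rule bigo_transform_eventually)
qed

lemma addition_defect_bigo_1_at_0: "addition_defect \<in> O[at 0](\<lambda>_. 1)"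
proof -
  obtain d where d: "d > 0" "\<And>y. y \<noteq> 0 \<Longrightarrow> dist y 0 < d \<Longrightarrow> y \<notin> addition_poles"
    using eventually_notin_addition_poles[of 0] by (auto simp: eventually_at)
  have near_0: "y + x \<notin> \<Lambda> \<and> y - x \<notin> \<Lambda>" "y \<notin> \<Lambda> - {0}" if "y \<in> ball 0 d" for y
    using d(2)[of y] that x_notin_lattice by (cases "y = 0"; auto simp: notin_addition_poles_iff)+
  define H where "H y = wzeta w1 w2 (y + x) + wzeta w1 w2 (y - x)" for y
  define k where "k y = H y + 2 * wp w1 w2 x * y" for y
  note H = wzeta_shifted_sum_second_order[OF d(1) near_0(1), folded H_def, folded k_def]
  have tails: "wp_tail holomorphic_on ball 0 d" "wzeta_tail holomorphic_on ball 0 d"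
    using near_0(2) by (auto intro: holomorphic_on_subset[OF holomorphic_wp_tail]
        holomorphic_on_subset[OF holomorphic_wzeta_tail])
  have "deriv wzeta_tail 0 = 0"
    using wzeta_tail_has_derivative[of 0] by (simp add: DERIV_imp_deriv)
  have cont: "f \<in> O[at 0](\<lambda>_. 1)" if "f holomorphic_on S" "open S" "0 \<in> S" for f S
    using that by (intro isCont_imp_bigo_1 isCont_holomorphic_on_open)
  have "(\<lambda>y. k y / (y - 0)\<^sup>2) \<in> O[at 0](\<lambda>_. 1)"
    using d(1) H(3,4) by (intro holomorphic_divide_square_bigo_1[OF H(2)])
  moreover have "(\<lambda>y. wp_tail y / (y - 0)) \<in> O[at 0](\<lambda>_. 1)"
    using d(1) by (intro holomorphic_divide_linear_bigo_1[OF tails(1)]) simp_all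
  moreover have "(\<lambda>y. wzeta_tail y / (y - 0)\<^sup>2) \<in> O[at 0](\<lambda>_. 1)"
    using d(1) \<open>deriv wzeta_tail 0 = 0\<close> by (intro holomorphic_divide_square_bigo_1[OF tails(2)]) simp_all
  moreover have "H \<in> O[at 0](\<lambda>_. 1)"
    using d(1) by (intro cont[OF H(1)]) auto
  moreover have "wp_tail \<in> O[at 0](\<lambda>_. 1)"
    by (rule cont[OF holomorphic_wp_tail open_lattice_compl[OF Diff_subset]]) simp
  moreover have "wzeta_tail \<in> O[at 0](\<lambda>_. 1)"
    by (rule cont[OF holomorphic_wzeta_tail open_lattice_compl[OF Diff_subset]]) simp
  moreover have "wp_tail' \<in> O[at 0](\<lambda>_. 1)"
    by (rule cont[OF holomorphic_wp_tail' open_lattice_compl[OF Diff_subset]]) simp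
  ultimately have "(\<lambda>y. k y / (y - 0)\<^sup>2 + H y * (wp_tail y - wp w1 w2 x) - 2 * (wp_tail y / (y - 0))
      - 2 * (wzeta_tail y / (y - 0)\<^sup>2) - 2 * wzeta_tail y * (wp_tail y - wp w1 w2 x) - wp_tail' y)
      \<in> O[at 0](\<lambda>_. 1)"
    by (intro sum_in_bigo landau_o.big.mult_in_1 bigo_const)
  moreover have "\<forall>\<^sub>F y in at 0. k y / (y - 0)\<^sup>2 + H y * (wp_tail y - wp w1 w2 x) - 2 * (wp_tail y / (y - 0))
      - 2 * (wzeta_tail y / (y - 0)\<^sup>2) - 2 * wzeta_tail y * (wp_tail y - wp w1 w2 x) - wp_tail' y
      = addition_defect y"
  proof (rule eventually_mono[OF eventually_neq_at_within[of 0]])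
    fix y :: complex
    assume "y \<noteq> 0"
    \<comment> \<open>Insert the Laurent expansions of \<open>\<zeta>\<close>, \<open>\<wp>\<close> and \<open>\<wp>'\<close> at \<open>0\<close>: all pole terms cancel.\<close>
    have "(h + 2 * c * y) / (y - 0)\<^sup>2 + h * (P - c) - 2 * (P / (y - 0)) - 2 * (Z / (y - 0)\<^sup>2)
        - 2 * Z * (P - c) - P' = (h - 2 * (1 / y + Z)) * (1 / y\<^sup>2 + P - c) - (-2 / y ^ 3 + P')"
      for h Z P P' c :: complex
      using \<open>y \<noteq> 0\<close> by (simp add: field_simps power2_eq_square power3_eq_cube)
    then show "k y / (y - 0)\<^sup>2 + H y * (wp_tail y - wp w1 w2 x) - 2 * (wp_tail y / (y - 0))
      - 2 * (wzeta_tail y / (y - 0)\<^sup>2) - 2 * wzeta_tail y * (wp_tail y - wp w1 w2 x) - wp_tail' y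
      = addition_defect y"
      unfolding k_def addition_defect_def H_def wzeta_eq[of y] wp_eq[of y] wp'_def .
  qed
  ultimately show ?thesis
    by (rule bigo_transform_eventually)
qed

lemma addition_defect_bigo_1: "addition_defect \<in> O[at p](\<lambda>_. 1)"
proof (cases "p \<in> addition_poles")
  case False
  have "open (- addition_poles)"
    using eventually_notin_addition_poles by (simp add: closed_limpt islimpt_iff_eventually open_Compl)
  then show ?thesis
    using False by (intro isCont_imp_bigo_1 isCont_holomorphic_on_open[OF holomorphic_addition_defect]) auto
next
  case True
  show ?thesis
  proof (cases "p \<in> \<Lambda>")
    case False
    with True show ?thesis
      by (rule addition_defect_bigo_1_off_lattice)
  next
    case p: True
    have "\<forall>\<^sub>F y in at 0. addition_defect y = addition_defect (y + p)"
      using eventually_notin_addition_poles[of 0]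
      by eventually_elim (simp add: addition_defect_periodic[OF p])
    with addition_defect_bigo_1_at_0 have "(\<lambda>y. addition_defect (y + p)) \<in> O[at 0](\<lambda>_. 1)"
      by (rule bigo_transform_eventually)
    then show ?thesis
      by (simp add: at_to_0[of p] landau_o.big.in_filtermap_iff)
  qed
qed

lemma addition_defect_eq_0:
  assumes "y \<notin> addition_poles"
  shows "addition_defect y = 0"
proof -
  obtain g where g: "g holomorphic_on UNIV" "\<And>y. y \<notin> addition_poles \<Longrightarrow> g y = addition_defect y"
    using entire_extension[OF eventually_notin_addition_poles holomorphic_addition_defect
        addition_defect_bigo_1] by blast
  have cont: "isCont g z" for z
    using g(1) by (rule isCont_holomorphic_on_open) auto
  have "g (z + a) = g z" if a: "a \<in> \<Lambda>" for z a
  proof (rule tendsto_unique[OF at_neq_bot])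
    have "((\<lambda>y. g (y + a)) \<longlongrightarrow> g (z + a)) (at z)"
      by (intro isCont_tendsto_compose[OF cont] tendsto_intros)
    moreover have "\<forall>\<^sub>F y in at z. g (y + a) = g y"
      using eventually_notin_addition_poles[of z]
      by eventually_elim (simp add: g(2) addition_defect_periodic[OF a])
    ultimately show "(g \<longlongrightarrow> g (z + a)) (at z)"
      by (rule Lim_transform_eventually)
    show "(g \<longlongrightarrow> g z) (at z)"
      using cont[of z] by (simp add: isCont_def)
  qed
  then obtain c where c: "\<And>y. g y = c"
    using entire_periodic_constant[OF g(1)] by (auto simp: constant_on_def)
  \<comment> \<open>The constant value is zero because the defect is odd.\<close>
  obtain y0 where y0: "y0 \<notin> addition_poles"
    using eventually_happens[OF eventually_notin_addition_poles[of 0]] by auto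
  have "c = addition_defect (- y0)"
    using c g(2)[OF addition_defect_minus(1)[OF y0]] by simp
  also have "\<dots> = - c"
    using c g(2)[OF y0] by (simp add: addition_defect_minus(2)[OF y0])
  finally have "c = 0" by simp
  then show ?thesis
    using c g(2)[OF assms] by simp
qed

end

context period_lattice
begin

lemma wzeta_addition:
  assumes "x \<notin> \<Lambda>" "y \<notin> \<Lambda>" "y + x \<notin> \<Lambda>" "y - x \<notin> \<Lambda>"
  shows "(wzeta w1 w2 (y + x) + wzeta w1 w2 (y - x) - 2 * wzeta w1 w2 y) * (wp w1 w2 y - wp w1 w2 x) = wp' y"
proof -
  interpret wp_addition w1 w2 x
    by unfold_locales (rule assms(1))
  have "addition_defect y = 0"
    using assms by (intro addition_defect_eq_0) (simp add: notin_addition_poles_iff)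
  then show ?thesis
    by (simp add: addition_defect_def)
qed

text \<open>The disjunct \<open>N = 1\<close> serves \<open>u\<^sub>1\<close>, where \<open>y - x\<close> may be a lattice point; its \<open>\<zeta>\<close>-term then has
  coefficient \<open>0\<close>.\<close>

lemma wp'_combination:
  fixes N :: complex
  assumes x: "x \<notin> \<Lambda>" and y: "y \<notin> \<Lambda>" "y + x \<notin> \<Lambda>" and N: "N = 1 \<or> y - x \<notin> \<Lambda>"
  shows "wp' x - N * wp' y = (wp w1 w2 x - wp w1 w2 y) *
           ((N + 1) * wzeta w1 w2 (y + x) - 2 * N * wzeta w1 w2 y
            + (N - 1) * wzeta w1 w2 (y - x) - 2 * wzeta w1 w2 x)"
proof (cases "y - x \<in> \<Lambda>")
  case True
  with N have "N = 1" by blast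
  moreover have "wp w1 w2 y = wp w1 w2 x" "wp' y = wp' x"
    using wp_periodic[OF True x] wp'_periodic[OF True x] by simp_all
  ultimately show ?thesis by simp
next
  case False
  have "x + y \<notin> \<Lambda>"
    using y(2) by (simp add: add.commute)
  moreover have "x - y \<notin> \<Lambda>"
    using False by (metis lattice_uminus_iff minus_diff_eq)
  ultimately have "(wzeta w1 w2 (x + y) + wzeta w1 w2 (x - y) - 2 * wzeta w1 w2 x)
      * (wp w1 w2 x - wp w1 w2 y) = wp' x"
    using x y by (intro wzeta_addition)
  moreover have "x + y = y + x" "wzeta w1 w2 (x - y) = - wzeta w1 w2 (y - x)"
    using wzeta_minus[of "y - x"] by simp_all
  ultimately have x_eq: "(wzeta w1 w2 (y + x) - wzeta w1 w2 (y - x) - 2 * wzeta w1 w2 x)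
      * (wp w1 w2 x - wp w1 w2 y) = wp' x"
    by simp
  have y_eq: "(wzeta w1 w2 (y + x) + wzeta w1 w2 (y - x) - 2 * wzeta w1 w2 y)
      * (wp w1 w2 y - wp w1 w2 x) = wp' y"
    using x y False by (intro wzeta_addition)
  show ?thesis
    unfolding x_eq[symmetric] y_eq[symmetric] by (simp add: algebra_simps)
qed

section \<open>The Toda chain\<close>

lemma toda_b_eq:
  "toda_b w1 w2 w \<beta> q \<mu>1 n = (\<lambda>t. \<mu>1
      + w * (of_nat n + 1) * wzeta w1 w2 ((of_nat n * w * (t + \<beta>) + q) + w * (t + \<beta>))
      - w * (of_nat n * wzeta w1 w2 (of_nat n * w * (t + \<beta>) + q))
      - (2 * of_nat n + 1) * w * wzeta w1 w2 (w * (t + \<beta>)))"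
proof
  fix t
  have "w * (of_nat n + 1) * (t + \<beta>) + q = (of_nat n * w * (t + \<beta>) + q) + w * (t + \<beta>)"
    "w * of_nat n * (t + \<beta>) + q = of_nat n * w * (t + \<beta>) + q"
    by (simp_all add: algebra_simps)
  then show "toda_b w1 w2 w \<beta> q \<mu>1 n t = \<mu>1
      + w * (of_nat n + 1) * wzeta w1 w2 ((of_nat n * w * (t + \<beta>) + q) + w * (t + \<beta>))
      - w * (of_nat n * wzeta w1 w2 (of_nat n * w * (t + \<beta>) + q))
      - (2 * of_nat n + 1) * w * wzeta w1 w2 (w * (t + \<beta>))"
    unfolding toda_b_def by (simp only: mult.assoc)
qed

lemma has_field_derivative_toda_b:
  assumes reg: "toda_regular w1 w2 w \<beta> q n t" "toda_regular w1 w2 w \<beta> q (n + 1) t"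
  shows "(toda_b w1 w2 w \<beta> q \<mu>1 n has_field_derivative
           toda_u w1 w2 w \<beta> q (n + 1) t - toda_u w1 w2 w \<beta> q n t) (at t)"
proof -
  define X where "X t = w * (t + \<beta>)" for t
  define Y where "Y t = of_nat n * w * (t + \<beta>) + q" for t
  have shift: "of_nat (n + 1) * w * (t + \<beta>) + q = Y t + X t"
    by (simp add: X_def Y_def algebra_simps)
  have X: "X t \<notin> \<Lambda>"
    using reg(1) by (simp add: toda_regular_def X_def)
  have YX: "Y t + X t \<notin> \<Lambda>"
    using reg(2)[unfolded toda_regular_def shift] by simp
  have dX: "(X has_field_derivative w) (at t)" and dY: "(Y has_field_derivative of_nat n * w) (at t)"
    unfolding X_def[abs_def] Y_def[abs_def] by (auto intro!: derivative_eq_intros)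
  have dZ1: "((\<lambda>t. wzeta w1 w2 (Y t + X t)) has_field_derivative
          - wp w1 w2 (Y t + X t) * (of_nat n * w + w)) (at t)"
    by (rule DERIV_chain2[where g="\<lambda>t. Y t + X t", OF has_field_derivative_wzeta[OF YX]])
       (intro derivative_intros dY dX)
  have dZ2: "((\<lambda>t. of_nat n * wzeta w1 w2 (Y t)) has_field_derivative
          of_nat n * (- wp w1 w2 (Y t) * (of_nat n * w))) (at t)"
  proof (cases "n = 0")
    case False
    then have "Y t \<notin> \<Lambda>"
      using reg(1) by (simp add: toda_regular_def Y_def)
    then show ?thesis
      by (intro DERIV_cmult DERIV_chain2[where g=Y, OF has_field_derivative_wzeta] dY)
  qed simp
  have dZ3: "((\<lambda>t. wzeta w1 w2 (X t)) has_field_derivative - wp w1 w2 (X t) * w) (at t)"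
    by (rule DERIV_chain2[where g=X, OF has_field_derivative_wzeta[OF X] dX])
  have D: "(toda_b w1 w2 w \<beta> q \<mu>1 n has_field_derivative
      0 + w * (of_nat n + 1) * (- wp w1 w2 (Y t + X t) * (of_nat n * w + w))
        - w * (of_nat n * (- wp w1 w2 (Y t) * (of_nat n * w)))
        - (2 * of_nat n + 1) * w * (- wp w1 w2 (X t) * w)) (at t)"
    unfolding toda_b_eq X_def[symmetric] Y_def[symmetric]
    by (intro DERIV_diff DERIV_add DERIV_const DERIV_cmult dZ1 dZ2 dZ3)
  have "toda_u w1 w2 w \<beta> q (n + 1) t = w\<^sup>2 * (of_nat n + 1)\<^sup>2 * (wp w1 w2 (X t) - wp w1 w2 (Y t + X t))"
    "toda_u w1 w2 w \<beta> q n t = w\<^sup>2 * (of_nat n)\<^sup>2 * (wp w1 w2 (X t) - wp w1 w2 (Y t))"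
    unfolding toda_u_def shift by (simp_all add: X_def Y_def add.commute)
  then show ?thesis
    by (simp only:) (rule DERIV_cong[OF D], simp add: algebra_simps power2_eq_square)
qed

lemma has_field_derivative_toda_u:
  assumes n: "n \<ge> 1"
    and reg: "toda_regular w1 w2 w \<beta> q (n - 1) t" "toda_regular w1 w2 w \<beta> q n t"
      "toda_regular w1 w2 w \<beta> q (n + 1) t"
  shows "(toda_u w1 w2 w \<beta> q n has_field_derivative
           toda_u w1 w2 w \<beta> q n t * (toda_b w1 w2 w \<beta> q \<mu>1 n t - toda_b w1 w2 w \<beta> q \<mu>1 (n - 1) t)) (at t)"
proof -
  define X where "X t = w * (t + \<beta>)" for t
  define Y where "Y t = of_nat n * w * (t + \<beta>) + q" for t
  have shift: "of_nat (n + 1) * w * (t + \<beta>) + q = Y t + X t"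
    by (simp add: X_def Y_def algebra_simps)
  have n1: "of_nat (n - 1) = (of_nat n - 1 :: complex)"
    using n by (simp add: of_nat_diff)
  have shift': "of_nat (n - 1) * w * (t + \<beta>) + q = Y t - X t"
    unfolding n1 by (simp add: X_def Y_def algebra_simps)
  have X: "X t \<notin> \<Lambda>" and Y: "Y t \<notin> \<Lambda>"
    using reg(2) n by (simp_all add: toda_regular_def X_def Y_def)
  have YX: "Y t + X t \<notin> \<Lambda>"
    using reg(3)[unfolded toda_regular_def shift] by simp
  have YmX: "of_nat n = (1 :: complex) \<or> Y t - X t \<notin> \<Lambda>"
    using reg(1)[unfolded toda_regular_def shift'] n by (cases "n = 1") auto
  have dX: "(X has_field_derivative w) (at t)" and dY: "(Y has_field_derivative of_nat n * w) (at t)"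
    unfolding X_def[abs_def] Y_def[abs_def] by (auto intro!: derivative_eq_intros)
  have D: "(toda_u w1 w2 w \<beta> q n has_field_derivative
      w\<^sup>2 * (of_nat n)\<^sup>2 * (wp' (X t) * w - wp' (Y t) * (of_nat n * w))) (at t)"
    unfolding toda_u_def[abs_def] X_def[symmetric] Y_def[symmetric]
    by (intro DERIV_cmult DERIV_diff DERIV_chain2[where g=X, OF has_field_derivative_wp[OF X] dX]
        DERIV_chain2[where g=Y, OF has_field_derivative_wp[OF Y] dY])
  define C where "C = (of_nat n + 1) * wzeta w1 w2 (Y t + X t) - 2 * of_nat n * wzeta w1 w2 (Y t)
    + (of_nat n - 1) * wzeta w1 w2 (Y t - X t) - 2 * wzeta w1 w2 (X t)"
  have "w\<^sup>2 * (of_nat n)\<^sup>2 * (wp' (X t) * w - wp' (Y t) * (of_nat n * w))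
      = w\<^sup>2 * (of_nat n)\<^sup>2 * w * (wp' (X t) - of_nat n * wp' (Y t))"
    by (simp add: algebra_simps)
  also have "\<dots> = w\<^sup>2 * (of_nat n)\<^sup>2 * (wp w1 w2 (X t) - wp w1 w2 (Y t)) * (w * C)"
    unfolding wp'_combination[OF X Y YX YmX] C_def by (simp add: algebra_simps)
  also have "\<dots> = toda_u w1 w2 w \<beta> q n t * (w * C)"
    by (simp add: toda_u_def X_def Y_def)
  also have "w * C = toda_b w1 w2 w \<beta> q \<mu>1 n t - toda_b w1 w2 w \<beta> q \<mu>1 (n - 1) t"
    unfolding C_def toda_b_eq n1 by (simp add: X_def Y_def algebra_simps)
  finally show ?thesis
    using D by simp
qed

end

theorem lemma1:
  fixes w1 w2 e1 e2 e3 w \<beta> q \<mu>1 :: complex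
  assumes nondeg: "Im (w2 / w1) \<noteq> 0"
    and esum: "e1 + e2 + e3 = 0"
    and wp_ode: "\<forall>z. z \<notin> lattice w1 w2 \<longrightarrow>
       (deriv (wp w1 w2) z)\<^sup>2 = 4 * (wp w1 w2 z - e1) * (wp w1 w2 z - e2) * (wp w1 w2 z - e3)"
  shows "(\<forall>t. toda_u w1 w2 w \<beta> q 0 t = 0)
    \<and> (\<forall>n\<ge>1. \<forall>t. toda_regular w1 w2 w \<beta> q (n - 1) t \<and> toda_regular w1 w2 w \<beta> q n t
           \<and> toda_regular w1 w2 w \<beta> q (n + 1) t \<longrightarrow>
         (toda_u w1 w2 w \<beta> q n has_field_derivative
            toda_u w1 w2 w \<beta> q n t *
              (toda_b w1 w2 w \<beta> q \<mu>1 n t - toda_b w1 w2 w \<beta> q \<mu>1 (n - 1) t)) (at t))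
    \<and> (\<forall>n. \<forall>t. toda_regular w1 w2 w \<beta> q n t \<and> toda_regular w1 w2 w \<beta> q (n + 1) t \<longrightarrow>
         (toda_b w1 w2 w \<beta> q \<mu>1 n has_field_derivative
            toda_u w1 w2 w \<beta> q (n + 1) t - toda_u w1 w2 w \<beta> q n t) (at t))"
proof -
  interpret period_lattice w1 w2
    by unfold_locales (rule nondeg)
  have "toda_u w1 w2 w \<beta> q 0 t = 0" for t
    by (simp add: toda_u_def)
  then show ?thesis
    using has_field_derivative_toda_u has_field_derivative_toda_b by blast
qed

end
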